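(* Let $X$ be a proper CAT(0) space and let $b$ and $c$ be distinct geodesic rays starting at $\mathfrak o$. Then for every $n>0$, $c$ is not contained in $\mathcal N_\kappa(b,n)$. In particular, distinct geodesic rays do not $\kappa$--fellow travel, so each $\kappa$--fellow travelling class of quasi-geodesic rays contains at most one geodesic ray.
   Context: $X$ has base point $\mathfrak o$, $\|x\|=d_X(\mathfrak o,x)$. $\kappa:[0,\infty)\to[1,\infty)$ is monotone increasing, concave and sublinear, $\kappa(x):=\kappa(\|x\|)$. $\mathcal N_\kappa(Z,n)=\{x: d_X(x,Z)\le n\,\kappa(x)\}$. Two quasi-geodesic rays (continuous quasi-isometric embeddings of $[0,\infty)$ starting at $\mathfrak o$) $\kappa$--fellow travel if each lies in some $(\kappa,n)$--neighbourhood of the other. *)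

theory Defs
  imports "HOL-Analysis.Analysis"
begin

text \<open>The space X is the whole (metric space) type 'a.\<close>

definition geodesic_segment :: "(real \<Rightarrow> 'a::metric_space) \<Rightarrow> 'a \<Rightarrow> 'a \<Rightarrow> bool" where
  "geodesic_segment g x y \<longleftrightarrow> g 0 = x \<and> g (dist x y) = y \<and>
     (\<forall>s\<in>{0..dist x y}. \<forall>t\<in>{0..dist x y}. dist (g s) (g t) = \<bar>s - t\<bar>)"

definition geodesic_space :: "'a::metric_space itself \<Rightarrow> bool" where
  "geodesic_space TYPE('a) \<longleftrightarrow> (\<forall>x y::'a. \<exists>g. geodesic_segment g x y)"

definition proper_space :: "'a::metric_space itself \<Rightarrow> bool" where
  "proper_space TYPE('a) \<longleftrightarrow> (\<forall>(x::'a) r. compact (cball x r))"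

text \<open>Point of the Euclidean comparison segment [a',b'] (in the plane, modelled by complex)
  corresponding to parameter s on a geodesic of length L.\<close>
definition cmp_pt :: "complex \<Rightarrow> complex \<Rightarrow> real \<Rightarrow> real \<Rightarrow> complex" where
  "cmp_pt a b L s = (if L = 0 then a else a + complex_of_real (s / L) * (b - a))"

definition CAT0 :: "'a::metric_space itself \<Rightarrow> bool" where
  "CAT0 TYPE('a) \<longleftrightarrow> geodesic_space TYPE('a) \<and>
    (\<forall>(p::'a) q r g1 g2 g3 p' q' r'.
       geodesic_segment g1 p q \<and> geodesic_segment g2 q r \<and> geodesic_segment g3 r p \<and>
       dist p' q' = dist p q \<and> dist q' r' = dist q r \<and> dist r' p' = dist r p \<longrightarrow>
       (\<forall>s\<in>{0..dist p q}. \<forall>t\<in>{0..dist q r}.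
          dist (g1 s) (g2 t) \<le> dist (cmp_pt p' q' (dist p q) s) (cmp_pt q' r' (dist q r) t)) \<and>
       (\<forall>s\<in>{0..dist q r}. \<forall>t\<in>{0..dist r p}.
          dist (g2 s) (g3 t) \<le> dist (cmp_pt q' r' (dist q r) s) (cmp_pt r' p' (dist r p) t)) \<and>
       (\<forall>s\<in>{0..dist r p}. \<forall>t\<in>{0..dist p q}.
          dist (g3 s) (g1 t) \<le> dist (cmp_pt r' p' (dist r p) s) (cmp_pt p' q' (dist p q) t)))"

definition geodesic_ray :: "'a::metric_space \<Rightarrow> (real \<Rightarrow> 'a) \<Rightarrow> bool" where
  "geodesic_ray o' g \<longleftrightarrow> g 0 = o' \<and> (\<forall>s\<ge>0. \<forall>t\<ge>0. dist (g s) (g t) = \<bar>s - t\<bar>)"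

definition quasi_geodesic_ray :: "'a::metric_space \<Rightarrow> (real \<Rightarrow> 'a) \<Rightarrow> bool" where
  "quasi_geodesic_ray o' g \<longleftrightarrow> g 0 = o' \<and> continuous_on {0..} g \<and>
     (\<exists>q Q. q \<ge> 1 \<and> Q \<ge> 0 \<and> (\<forall>s\<ge>0. \<forall>t\<ge>0.
        \<bar>s - t\<bar> / q - Q \<le> dist (g s) (g t) \<and> dist (g s) (g t) \<le> q * \<bar>s - t\<bar> + Q))"

definition sublinear_kappa :: "(real \<Rightarrow> real) \<Rightarrow> bool" where
  "sublinear_kappa \<kappa> \<longleftrightarrow> mono_on {0..} \<kappa> \<and> concave_on {0..} \<kappa> \<and>
     (\<forall>t\<ge>0. \<kappa> t \<ge> 1) \<and> ((\<lambda>t. \<kappa> t / t) \<longlongrightarrow> 0) at_top"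

definition kappa_nbhd :: "(real \<Rightarrow> real) \<Rightarrow> 'a::metric_space \<Rightarrow> 'a set \<Rightarrow> real \<Rightarrow> 'a set" where
  "kappa_nbhd \<kappa> o' Z n = {x. infdist x Z \<le> n * \<kappa> (dist o' x)}"

definition kappa_fellow_travel :: "(real \<Rightarrow> real) \<Rightarrow> 'a::metric_space \<Rightarrow> (real \<Rightarrow> 'a) \<Rightarrow> (real \<Rightarrow> 'a) \<Rightarrow> bool" where
  "kappa_fellow_travel \<kappa> o' a b \<longleftrightarrow>
     (\<exists>n. a ` {0..} \<subseteq> kappa_nbhd \<kappa> o' (b ` {0..}) n) \<and>
     (\<exists>n. b ` {0..} \<subseteq> kappa_nbhd \<kappa> o' (a ` {0..}) n)"

end

theory Submission
  imports Defs
begin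

text \<open>Comparing the triangle with vertices \<open>o\<close>, \<open>b t\<close>, \<open>c t\<close> with an isosceles Euclidean
  triangle shows that \<open>d(b s, c s) \<ge> (s/t) d(b t, c t)\<close> for \<open>s \<le> t\<close>, so two distinct geodesic
  rays from \<open>o\<close> diverge at least linearly. Since \<open>c t\<close> is at distance at least
  \<open>d(b t, c t)/2\<close> from the whole ray \<open>b\<close>, the distance from \<open>c t\<close> to \<open>b\<close> grows linearly in
  \<open>t = \<parallel>c t\<parallel>\<close>, which no bound \<open>n \<kappa>(t)\<close> with sublinear \<open>\<kappa>\<close> can dominate.\<close>

lemma isosceles_triangle_in_plane:
  fixes t D :: real
  assumes "0 \<le> D" "D \<le> 2 * t"
  shows "\<exists>q r :: complex. cmod q = t \<and> cmod r = t \<and> cmod (q - r) = D"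
proof -
  define x where "x = sqrt (t\<^sup>2 - D\<^sup>2 / 4)"
  have "D\<^sup>2 \<le> (2 * t)\<^sup>2" using assms by (intro power_mono) auto
  then have x2: "x\<^sup>2 = t\<^sup>2 - D\<^sup>2 / 4" unfolding x_def by (simp add: power_mult_distrib)
  have "cmod (Complex x (D/2)) = t" "cmod (Complex x (- D/2)) = t"
    unfolding cmod_def using x2 assms by (simp_all add: power_divide)
  moreover have "cmod (Complex x (D/2) - Complex x (- D/2)) = D"
    unfolding cmod_def using assms by simp
  ultimately show ?thesis by blast
qed

lemma geodesic_ray_dist_origin:
  assumes "geodesic_ray o' b" "0 \<le> t"
  shows "dist o' (b t) = t"
  using assms unfolding geodesic_ray_def by (metis abs_of_nonneg diff_0 abs_minus_cancel order_refl)

lemma geodesic_ray_initial_segment: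
  assumes "geodesic_ray o' b" "0 \<le> t"
  shows "geodesic_segment b o' (b t)"
  using assms geodesic_ray_dist_origin[OF assms]
  unfolding geodesic_segment_def geodesic_ray_def by auto

lemma geodesic_ray_reversed_segment:
  assumes "geodesic_ray o' c" "0 \<le> t"
  shows "geodesic_segment (\<lambda>s. c (t - s)) (c t) o'"
  using assms geodesic_ray_dist_origin[OF assms]
  unfolding geodesic_segment_def geodesic_ray_def by (auto simp: dist_commute abs_minus_commute)

lemma CAT0_comparison:
  assumes "CAT0 TYPE('a::metric_space)"
    and "geodesic_segment g1 p q" "geodesic_segment g2 q r" "geodesic_segment g3 r (p::'a)"
    and "dist p' q' = dist p q" "dist q' r' = dist q r" "dist r' p' = dist r p"
    and "s \<in> {0..dist r p}" "u \<in> {0..dist p q}"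
  shows "dist (g3 s) (g1 u) \<le> dist (cmp_pt r' p' (dist r p) s) (cmp_pt p' q' (dist p q) u)"
  using assms unfolding CAT0_def by blast

lemma cmp_pt_from_origin:
  assumes "0 < L"
  shows "cmp_pt q 0 L (L - s) = complex_of_real (s / L) * q"
    and "cmp_pt 0 q L s = complex_of_real (s / L) * q"
  using assms unfolding cmp_pt_def by (simp_all add: field_simps)

lemma CAT0_geodesic_rays_dist_le:
  assumes cat: "CAT0 TYPE('a::metric_space)"
    and b: "geodesic_ray o' b" and c: "geodesic_ray o' (c :: real \<Rightarrow> 'a)"
    and "0 \<le> s" "s \<le> t" "0 < t"
  shows "dist (b s) (c s) \<le> s / t * dist (b t) (c t)"
proof -
  have db: "dist o' (b t) = t" and dc: "dist (c t) o' = t"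
    using geodesic_ray_dist_origin[OF b] geodesic_ray_dist_origin[OF c] assms
    by (auto simp: dist_commute)
  define D where "D = dist (b t) (c t)"
  have "D \<le> 2 * t"
    unfolding D_def using dist_triangle3[of "b t" "c t" o'] db dc by (simp add: dist_commute)
  then obtain q r :: complex where qr: "cmod q = t" "cmod r = t" "cmod (q - r) = D"
    using isosceles_triangle_in_plane[of D t] by (auto simp: D_def)
  obtain g where g: "geodesic_segment g (b t) (c t)"
    using cat unfolding CAT0_def geodesic_space_def by blast
  have "dist (c (t - (t - s))) (b s) \<le> dist (cmp_pt r 0 t (t - s)) (cmp_pt 0 q t s)"
    using CAT0_comparison[OF cat geodesic_ray_initial_segment[OF b] g
        geodesic_ray_reversed_segment[OF c], of 0 q r "t - s" s] qr db dc assms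
    by (simp add: dist_norm D_def)
  also have "\<dots> = cmod (complex_of_real (s / t) * (r - q))"
    using cmp_pt_from_origin \<open>0 < t\<close> by (simp add: dist_norm right_diff_distrib)
  also have "\<dots> = s / t * D"
    using qr assms
    by (simp only: norm_mult norm_of_real norm_minus_commute) (simp add: abs_of_nonneg)
  finally show ?thesis by (simp add: D_def dist_commute)
qed

lemma geodesic_rays_half_dist_le_infdist:
  assumes b: "geodesic_ray o' b" and c: "geodesic_ray o' c" and "0 \<le> t"
  shows "dist (b t) (c t) / 2 \<le> infdist (c t) (b ` {0..})"
proof -
  have "dist (b t) (c t) / 2 \<le> dist (c t) (b s)" if "0 \<le> s" for s
  proof -
    have "\<bar>t - s\<bar> \<le> dist (c t) (b s)"
      using dist_triangle[of o' "c t" "b s"] dist_triangle[of o' "b s" "c t"] that assms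
        geodesic_ray_dist_origin[OF b] geodesic_ray_dist_origin[OF c]
      by (simp add: dist_commute abs_le_iff)
    moreover have "dist (b t) (b s) = \<bar>t - s\<bar>"
      using b that assms unfolding geodesic_ray_def by blast
    ultimately show ?thesis using dist_triangle[of "b t" "c t" "b s"] by (simp add: dist_commute)
  qed
  then have "dist (b t) (c t) / 2 \<le> (INF x\<in>b ` {0..}. dist (c t) x)"
    by (intro cINF_greatest) auto
  then show ?thesis by (simp add: infdist_notempty)
qed

lemma sublinear_eventually_less_linear:
  fixes \<kappa> :: "real \<Rightarrow> real"
  assumes "((\<lambda>t. \<kappa> t / t) \<longlongrightarrow> 0) at_top" "0 < a" "0 < n"
  shows "eventually (\<lambda>t. n * \<kappa> t < a * t) at_top"
proof -
  have "eventually (\<lambda>t. \<kappa> t / t < a / n \<and> 0 < t) at_top"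
    using order_tendstoD(2)[OF assms(1)] assms(2,3) eventually_gt_at_top[of 0]
    by (auto intro: eventually_conj)
  then show ?thesis
  proof eventually_elim
    case (elim t)
    then have "\<kappa> t < a / n * t" using pos_divide_less_eq[of t "\<kappa> t" "a / n"] by blast
    then have "n * \<kappa> t < n * (a / n * t)" using assms(3) by (rule mult_strict_left_mono)
    also have "\<dots> = a * t" using assms(3) by simp
    finally show ?case .
  qed
qed

lemma CAT0_geodesic_rays_infdist_ge_linear:
  assumes "CAT0 TYPE('a::metric_space)"
    and "geodesic_ray o' b" "geodesic_ray o' (c :: real \<Rightarrow> 'a)"
    and "0 < s" "s \<le> t"
  shows "dist (b s) (c s) / (2 * s) * t \<le> infdist (c t) (b ` {0..})"
proof -
  have "dist (b s) (c s) / (2 * s) * t \<le> dist (b t) (c t) / 2"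
    using CAT0_geodesic_rays_dist_le[OF assms(1-3), of s t] assms(4,5)
    by (simp add: field_simps)
  also have "\<dots> \<le> infdist (c t) (b ` {0..})"
    using geodesic_rays_half_dist_le_infdist[OF assms(2,3), of t] assms(4,5) by simp
  finally show ?thesis .
qed

lemma geodesic_ray_not_subset_kappa_nbhd:
  assumes "((\<lambda>t. \<kappa> t / t) \<longlongrightarrow> 0) at_top" "geodesic_ray o' c" "0 < a" "0 < n"
    and far: "\<And>t. T \<le> t \<Longrightarrow> a * t \<le> infdist (c t) Z"
  shows "\<not> c ` {0..} \<subseteq> kappa_nbhd \<kappa> o' Z n"
proof
  assume sub: "c ` {0..} \<subseteq> kappa_nbhd \<kappa> o' Z n"
  have "eventually (\<lambda>t. a * t \<le> n * \<kappa> t) at_top"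
    using eventually_ge_at_top[of "max T 0"]
  proof eventually_elim
    case (elim t)
    then have "c t \<in> kappa_nbhd \<kappa> o' Z n" using sub by auto
    then have "infdist (c t) Z \<le> n * \<kappa> t"
      using geodesic_ray_dist_origin[OF assms(2), of t] elim by (simp add: kappa_nbhd_def)
    then show ?case using far[of t] elim by linarith
  qed
  moreover have "eventually (\<lambda>t. n * \<kappa> t < a * t) at_top"
    using sublinear_eventually_less_linear assms(1,3,4) .
  ultimately have "eventually (\<lambda>t. a * t < a * t) at_top"
    by eventually_elim linarith
  then show False by simp
qed

lemma kappa_nbhd_mono:
  assumes "\<And>t. 0 \<le> t \<Longrightarrow> 0 \<le> \<kappa> t" "n \<le> m"
  shows "kappa_nbhd \<kappa> o' Z n \<subseteq> kappa_nbhd \<kappa> o' Z m"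
proof
  fix x assume "x \<in> kappa_nbhd \<kappa> o' Z n"
  moreover have "n * \<kappa> (dist o' x) \<le> m * \<kappa> (dist o' x)"
    using assms by (intro mult_right_mono) auto
  ultimately show "x \<in> kappa_nbhd \<kappa> o' Z m" unfolding kappa_nbhd_def by auto
qed

lemma kappa_fellow_travel_imp_subset_kappa_nbhd:
  assumes "kappa_fellow_travel \<kappa> o' b c" "\<And>t. 0 \<le> t \<Longrightarrow> 1 \<le> \<kappa> t"
  obtains n where "0 < n" "c ` {0..} \<subseteq> kappa_nbhd \<kappa> o' (b ` {0..}) n"
proof -
  obtain n where "c ` {0..} \<subseteq> kappa_nbhd \<kappa> o' (b ` {0..}) n"
    using assms(1) unfolding kappa_fellow_travel_def by blast
  also have "\<dots> \<subseteq> kappa_nbhd \<kappa> o' (b ` {0..}) (max n 1)"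
  proof (rule kappa_nbhd_mono)
    show "0 \<le> \<kappa> t" if "0 \<le> t" for t using assms(2)[OF that] by linarith
  qed simp
  finally show ?thesis using that[of "max n 1"] by simp
qed

theorem lemma3p3:
  fixes \<kappa> :: "real \<Rightarrow> real" and o' :: "'a::metric_space" and b c :: "real \<Rightarrow> 'a"
  assumes "sublinear_kappa \<kappa>"
    and "proper_space TYPE('a)" and "CAT0 TYPE('a)"
    and "geodesic_ray o' b" and "geodesic_ray o' c"
    and "\<exists>t\<ge>0. b t \<noteq> c t"
  shows "(\<forall>n>0. \<not> (c ` {0..} \<subseteq> kappa_nbhd \<kappa> o' (b ` {0..}) n))
         \<and> \<not> kappa_fellow_travel \<kappa> o' b c"
proof -
  obtain s where s: "0 \<le> s" "b s \<noteq> c s" using assms(6) by blast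
  then have "0 < s" using assms(4,5) unfolding geodesic_ray_def by (cases "s = 0") auto
  have \<kappa>: "((\<lambda>t. \<kappa> t / t) \<longlongrightarrow> 0) at_top" "\<And>t. 0 \<le> t \<Longrightarrow> 1 \<le> \<kappa> t"
    using assms(1) unfolding sublinear_kappa_def by auto
  have not_nbhd: "\<not> c ` {0..} \<subseteq> kappa_nbhd \<kappa> o' (b ` {0..}) n" if "0 < n" for n
    using geodesic_ray_not_subset_kappa_nbhd[OF \<kappa>(1) assms(5) _ that
        CAT0_geodesic_rays_infdist_ge_linear[OF assms(3-5) \<open>0 < s\<close>]] s \<open>0 < s\<close>
    by simp
  moreover have "\<not> kappa_fellow_travel \<kappa> o' b c"
  proof
    assume "kappa_fellow_travel \<kappa> o' b c"
    then obtain n where "0 < n" "c ` {0..} \<subseteq> kappa_nbhd \<kappa> o' (b ` {0..}) n"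
      using kappa_fellow_travel_imp_subset_kappa_nbhd \<kappa>(2) by blast
    then show False using not_nbhd by blast
  qed
  ultimately show ?thesis by blast
qed

end
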